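(* Let $n\geq1$. For all $a,r\in\mathbb N$ and all $l\in\mathbb N$ with $l\leq n$, $$\sum_{i=0}^l(-1)^i\binom{l}{i}\sum_{j=0}^{n-l+1}(-1)^{n-l+1+j}\binom{n-l+1}{j}\overline{(a+r+j,\,r+i+j)}=\bar0.$$
   Context: $\Lambda_{2,n}=\{\alpha\in\mathbb N^2:1\leq\alpha_1+\alpha_2\leq n\}$, $\lambda_{2,n}=|\Lambda_{2,n}|$, and for $v\in\mathbb N^2$, $\bar v=\big(\binom{v_1}{\alpha_1}\binom{v_2}{\alpha_2}\big)_{\alpha\in\Lambda_{2,n}}\in\mathbb C^{\lambda_{2,n}}$; $\bar0$ is the zero vector. *)

theory Defs
  imports Complex_Main
begin

definition Lambda2 :: "nat \<Rightarrow> (nat \<times> nat) set" where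
  "Lambda2 n = {\<alpha>. 1 \<le> fst \<alpha> + snd \<alpha> \<and> fst \<alpha> + snd \<alpha> \<le> n}"

(* The vector bar v in C^{Lambda_{2,n}}, represented as a function on N^2
   whose support is contained in Lambda_{2,n} (value 0 outside). *)
definition barv :: "nat \<Rightarrow> nat \<times> nat \<Rightarrow> (nat \<times> nat) \<Rightarrow> complex" where
  "barv n v = (\<lambda>\<alpha>. if \<alpha> \<in> Lambda2 n
      then of_nat ((fst v choose fst \<alpha>) * (snd v choose snd \<alpha>)) else 0)"

end

theory Submission imports Defs "HOL-Computational_Algebra.Polynomial" begin

text \<open>For \<open>\<alpha> = (p, q)\<close> the double sum is, up to sign, an \<open>(n - l + 1)\<close>-fold difference
  in \<open>j\<close> of \<open>C(a + r + j, p)\<close> times an \<open>l\<close>-fold difference in \<open>i\<close> of \<open>C(r + j + i, q)\<close>.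
  Differencing \<open>C(y, q)\<close> \<open>l\<close> times gives \<open>\<plusminus>C(y, q - l)\<close>, or \<open>0\<close> if \<open>q < l\<close>, so the outer
  difference is applied to a polynomial in \<open>j\<close> of degree at most \<open>p + q - l \<le> n - l\<close> and
  annihilates it.\<close>

text \<open>\<open>alt_diff m\<close> is \<open>(1 - E)\<^sup>m\<close> for the shift \<open>E f y = f (y + 1)\<close>, i.e. \<open>(-1)\<^sup>m\<close> times the
  \<open>m\<close>-th forward difference.\<close>

definition alt_diff :: "nat \<Rightarrow> (nat \<Rightarrow> 'a::comm_ring_1) \<Rightarrow> nat \<Rightarrow> 'a" where
  "alt_diff m f x = (\<Sum>i\<le>m. (-1) ^ i * of_nat (m choose i) * f (x + i))"

lemma alt_diff_Suc: "alt_diff (Suc m) f x = alt_diff m (\<lambda>y. f y - f (Suc y)) x"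
proof -
  have "alt_diff (Suc m) f x
      = f x + (\<Sum>i\<le>m. (-1) ^ Suc i * of_nat (Suc m choose Suc i) * f (x + Suc i))"
    unfolding alt_diff_def sum.atMost_Suc_shift by simp
  also have "\<dots> = f x + (\<Sum>i\<le>m. (-1) ^ Suc i * of_nat (m choose Suc i) * f (x + Suc i))
            - (\<Sum>i\<le>m. (-1) ^ i * of_nat (m choose i) * f (Suc (x + i)))"
    by (simp add: sum_subtractf[symmetric] sum.distrib[symmetric] algebra_simps)
  also have "\<dots> = (\<Sum>i\<le>Suc m. (-1) ^ i * of_nat (m choose i) * f (x + i))
            - (\<Sum>i\<le>m. (-1) ^ i * of_nat (m choose i) * f (Suc (x + i)))"
    by (subst sum.atMost_Suc_shift) simp
  also have "\<dots> = (\<Sum>i\<le>m. (-1) ^ i * of_nat (m choose i) * f (x + i))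
            - (\<Sum>i\<le>m. (-1) ^ i * of_nat (m choose i) * f (Suc (x + i)))"
    by (simp add: binomial_eq_0)
  also have "\<dots> = alt_diff m (\<lambda>y. f y - f (Suc y)) x"
    unfolding alt_diff_def by (simp add: sum_subtractf algebra_simps)
  finally show ?thesis .
qed

lemma alt_diff_cmult: "alt_diff m (\<lambda>y. c * f y) x = c * alt_diff m f x"
  unfolding alt_diff_def by (simp add: sum_distrib_left algebra_simps)

lemma alt_diff_choose:
  "alt_diff l (\<lambda>y. of_nat (y choose q)) x
     = (if l \<le> q then (-1) ^ l * of_nat (x choose (q - l)) else (0::'a::comm_ring_1))"
proof (induction l arbitrary: q)
  case 0
  then show ?case by (simp add: alt_diff_def)
next
  case (Suc l)
  show ?case
  proof (cases q)
    case 0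
    then show ?thesis by (simp add: alt_diff_Suc) (simp add: alt_diff_def)
  next
    case (Suc q')
    have "alt_diff (Suc l) (\<lambda>y. of_nat (y choose Suc q') :: 'a) x
        = alt_diff l (\<lambda>y. - 1 * of_nat (y choose q')) x"
      by (simp add: alt_diff_Suc)
    also have "\<dots> = - alt_diff l (\<lambda>y. of_nat (y choose q')) x"
      by (simp only: alt_diff_cmult) simp
    finally show ?thesis
      using Suc.IH[of q'] \<open>q = Suc q'\<close> by simp
  qed
qed

lemma degree_diff_pcompose_shift:
  fixes P :: "'a::idom poly"
  shows "degree (P - pcompose P [:c, 1:]) \<le> degree P - 1"
proof (rule degree_le, intro allI impI)
  fix i assume i: "degree P - 1 < i"
  have deg: "degree (pcompose P [:c, 1:]) = degree P"
    by (simp add: degree_pcompose)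
  show "coeff (P - pcompose P [:c, 1:]) i = 0"
  proof (cases "i = degree P")
    case True
    then show ?thesis
      using lead_coeff_comp[of "[:c, 1:]" P] deg by simp
  next
    case False
    with i deg show ?thesis by (simp add: coeff_eq_0)
  qed
qed

lemma alt_diff_poly_eq_0:
  fixes P :: "'a::idom poly"
  assumes "degree P < m"
  shows "alt_diff m (\<lambda>y. poly P (of_nat y)) x = 0"
  using assms
proof (induction m arbitrary: P)
  case 0
  then show ?case by simp
next
  case (Suc m)
  define Q where "Q = P - pcompose P [:1, 1:]"
  have "alt_diff m (\<lambda>y. poly Q (of_nat y)) x = 0"
  proof (cases "degree P = 0")
    case True
    then have "Q = 0"
      by (auto simp: Q_def elim: degree_eq_zeroE)
    then show ?thesis by (simp add: alt_diff_def)
  next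
    case False
    then have "degree Q < m"
      using degree_diff_pcompose_shift[of P 1] Suc.prems by (simp add: Q_def)
    then show ?thesis by (rule Suc.IH)
  qed
  moreover have "alt_diff (Suc m) (\<lambda>y. poly P (of_nat y)) x
      = alt_diff m (\<lambda>y. poly Q (of_nat y)) x"
    by (simp add: alt_diff_Suc Q_def poly_pcompose algebra_simps)
  ultimately show ?case by simp
qed

lemma choose_shift_poly:
  "\<exists>P :: 'a::field_char_0 poly. degree P \<le> k \<and> (\<forall>y. poly P (of_nat y) = of_nat ((c + y) choose k))"
proof -
  define P :: "'a poly" where
    "P = smult (1 / fact k) (\<Prod>i<k. [:of_nat c - of_nat i, 1:])"
  have "degree (\<Prod>i<k. [:of_nat c - of_nat i, 1:] :: 'a poly) \<le> k"
    using degree_prod_sum_le[of "{..<k}" "\<lambda>i. [:of_nat c - of_nat i, 1:] :: 'a poly"] by simp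
  then have "degree P \<le> k"
    unfolding P_def using degree_smult_le order_trans by blast
  moreover have "poly P (of_nat y) = of_nat ((c + y) choose k)" for y
    by (simp add: P_def poly_prod binomial_gbinomial gbinomial_prod_rev lessThan_atLeast0 algebra_simps)
  ultimately show ?thesis by blast
qed

lemma alt_diff_choose_product_eq_0:
  assumes "p + q < l + m"
  shows "alt_diff m (\<lambda>j. of_nat ((b + j) choose p) * alt_diff l (\<lambda>y. of_nat (y choose q)) (c + j)) 0
         = (0::'a::field_char_0)"
proof (cases "l \<le> q")
  case False
  then show ?thesis by (simp add: alt_diff_choose alt_diff_def)
next
  case True
  obtain B :: "'a poly" where B: "degree B \<le> p" "\<And>y. poly B (of_nat y) = of_nat ((b + y) choose p)"
    using choose_shift_poly by blast
  obtain C :: "'a poly" where C: "degree C \<le> q - l" "\<And>y. poly C (of_nat y) = of_nat ((c + y) choose (q - l))"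
    using choose_shift_poly by blast
  have "degree (B * C) \<le> p + (q - l)"
    using degree_mult_le[of B C] B(1) C(1) by linarith
  then have "degree (smult ((-1) ^ l) (B * C)) < m"
    using degree_smult_le[of "(-1) ^ l" "B * C"] True assms by linarith
  then have "alt_diff m (\<lambda>y. poly (smult ((-1) ^ l) (B * C)) (of_nat y)) 0 = 0"
    by (rule alt_diff_poly_eq_0)
  then show ?thesis
    using True by (simp add: alt_diff_choose B(2) C(2) mult.left_commute)
qed

theorem lemma2p12:
  fixes n a r l :: nat
  assumes "n \<ge> 1" and "l \<le> n"
  shows "(\<lambda>\<alpha>. \<Sum>i=0..l. \<Sum>j=0..n-l+1.
            ((-1) ^ i * of_nat (l choose i)
              * (-1) ^ (n - l + 1 + j) * of_nat ((n - l + 1) choose j))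
            * barv n (a + r + j, r + i + j) \<alpha>)
         = (\<lambda>_. 0 :: complex)"
proof (rule ext)
  fix \<alpha> :: "nat \<times> nat"
  obtain p q where pq: "\<alpha> = (p, q)" by fastforce
  define m where "m = n - l + 1"
  show "(\<Sum>i=0..l. \<Sum>j=0..n-l+1.
            ((-1) ^ i * of_nat (l choose i)
              * (-1) ^ (n - l + 1 + j) * of_nat ((n - l + 1) choose j))
            * barv n (a + r + j, r + i + j) \<alpha>) = 0"
  proof (cases "\<alpha> \<in> Lambda2 n")
    case False
    then show ?thesis by (simp add: barv_def)
  next
    case True
    then have "p + q < l + m" by (auto simp: pq m_def Lambda2_def)
    have "(\<Sum>i=0..l. \<Sum>j=0..n-l+1.
            ((-1) ^ i * of_nat (l choose i)
              * (-1) ^ (n - l + 1 + j) * of_nat ((n - l + 1) choose j))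
            * barv n (a + r + j, r + i + j) \<alpha>)
        = (\<Sum>j\<le>m. \<Sum>i\<le>l. ((-1) ^ (m + j) * of_nat (m choose j) * of_nat ((a + r + j) choose p))
            * ((-1) ^ i * of_nat (l choose i) * of_nat (((r + j) + i) choose q)))"
      using True unfolding pq m_def atLeast0AtMost
      by (subst sum.swap) (intro sum.cong refl, simp add: barv_def algebra_simps)
    also have "\<dots> = (-1) ^ m * alt_diff m (\<lambda>j. of_nat ((a + r + j) choose p)
             * alt_diff l (\<lambda>y. of_nat (y choose q)) (r + j)) 0"
      unfolding alt_diff_def sum_distrib_left
      by (intro sum.cong refl) (simp add: power_add mult_ac)
    also have "\<dots> = 0"
      using alt_diff_choose_product_eq_0[OF \<open>p + q < l + m\<close>] by simp
    finally show ?thesis .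
  qed
qed

end
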